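(* Let $(M,L)$ be a circle pair with $m=2$, $L=S_1\sqcup S_2$, as in the context. Let $N$ be a subset with $L\subset N\subset M$, let $i_1:S_1\to N$, $i_2:S_2\to N$ be the inclusions, and assume $(i_1)_*:\pi_1(S_1,p_1)\to\pi_1(N,p_1)$ is injective. Let $f:(S_1,p_1)\to(S_2,p_2)$ be a continuous map of degree $\ell$, let $H:S_1\times[0,1]\to N$ be a continuous homotopy from $i_1$ to $i_2\circ f$, and let $\alpha:=H(p_1,\cdot)$. If $F\in{\rm Isot}^r(M,L)_{\mathrm{id},\mathrm{id}}$ satisfies $F_t(\alpha(s))\in N$ for all $s,t\in[0,1]$, then $\nu_2(F)=\ell\,\nu_1(F)$.
   Context: Circle pair: $M$ a $C^r$ $n$-manifold ($n\ge2$, $r\in\{0,1,\dots\}\cup\{\infty\}$), $S_1,S_2$ disjoint $C^r$ circles in $\mathrm{Int}M$, each identified with $\mathbb R/\mathbb Z$ (fixing orientations for degrees) and with base point $p_i$. A $C^r$ isotopy of $(M,L)$ is $F=(F_t)_{t\in[0,1]}$ with $(x,t)\mapsto(F_t(x),t)$ a $C^r$ diffeomorphism of $M\times[0,1]$ and $F_t(L)=L$; ${\rm Isot}^r(M,L)_{\mathrm{id},\mathrm{id}}$: those with $F_0=F_1=\mathrm{id}$. $\nu_i(F)=\lambda(t\mapsto F_t(p_i))$ with $\lambda(\gamma)=\tilde\gamma(1)-\tilde\gamma(0)$ for a lift $\tilde\gamma$ (for a loop this is its degree). *)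

theory Defs
  imports "HOL-Analysis.Analysis"
begin

text \<open>Topological n-manifold (possibly with boundary), realised as a subset M of a
  Hausdorff type with the subspace topology; n = CARD('n).  Charts go to relatively
  open subsets of a closed half-space of real^'n (which includes open subsets of real^'n).\<close>
definition top_manifold :: "'a::t2_space set \<Rightarrow> 'n::finite itself \<Rightarrow> bool" where
  "top_manifold M _ \<longleftrightarrow>
     second_countable (top_of_set M) \<and>
     (\<forall>p\<in>M. \<exists>U (V::(real^'n) set) k.
        openin (top_of_set M) U \<and> p \<in> U \<and>
        openin (top_of_set {x. 0 \<le> x $ k}) V \<and> U homeomorphic V)"

definition manifold_interior :: "'a::t2_space set \<Rightarrow> 'n::finite itself \<Rightarrow> 'a set" where
  "manifold_interior M _ =
     {p\<in>M. \<exists>U (V::(real^'n) set). openin (top_of_set M) U \<and> p \<in> U \<and> open V \<and> U homeomorphic V}"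

text \<open>A circle S in M identified with R/Z via a continuous, 1-periodic map c that is
  injective on [0,1) with image S (an embedding of R/Z, since M is Hausdorff).\<close>
definition circle_param :: "(real \<Rightarrow> 'a::t2_space) \<Rightarrow> 'a set \<Rightarrow> bool" where
  "circle_param c S \<longleftrightarrow> continuous_on UNIV c \<and> (\<forall>s. c (s + 1) = c s) \<and>
     inj_on c {0..<1} \<and> c ` {0..<1} = S"

text \<open>lambda(gamma) = lift(1) - lift(0) for a path gamma in the circle parametrised by c
  (independent of the choice of lift).\<close>
definition circ_lambda :: "(real \<Rightarrow> 'a) \<Rightarrow> (real \<Rightarrow> 'a) \<Rightarrow> real" where
  "circ_lambda c \<gamma> = (SOME d. \<exists>g. continuous_on {0..1} g \<and>
       (\<forall>t\<in>{0..1}. c (g t) = \<gamma> t) \<and> d = g 1 - g 0)"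

text \<open>Isotopy of (M,L) (C^0 case): (x,t) |-> (F_t x, t) is a homeomorphism of M x [0,1],
  F_t(L) = L, and F_0 = F_1 = id.\<close>
definition isot_id_id :: "'a::topological_space set \<Rightarrow> 'a set \<Rightarrow> (real \<Rightarrow> 'a \<Rightarrow> 'a) \<Rightarrow> bool" where
  "isot_id_id M L F \<longleftrightarrow>
     (\<exists>G. homeomorphism (M \<times> {0..1}) (M \<times> {0..1}) (\<lambda>(x,t). (F t x, t)) G) \<and>
     (\<forall>t\<in>{0..1}. F t ` L = L) \<and> (\<forall>x\<in>M. F 0 x = x \<and> F 1 x = x)"

end

theory Submission
  imports Defs
begin

text \<open>Sweeping alpha by the isotopy gives a
  square in N whose vertical sides are the tracks of p1 and p2 and whose horizontal sides are both
  alpha (as F_0 = F_1 = id); running the square l times around in the track direction shows that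
  the l-fold track of p1 is homotopic in N to alpha followed by the l-fold track of p2 and alpha
  backwards. The l-fold track of p2 has degree l * nu_2, so it is homotopic in S2 to f o Q, where
  Q is the loop of degree nu_2 at p1 in S1; sweeping Q by H shows that Q is homotopic in N to
  alpha, f o Q, alpha backwards. So the l-fold track of p1 is homotopic to Q in N, hence in S1 by
  the injectivity hypothesis, and comparing degrees gives l * nu_1 = nu_2. Degrees are computed
  with lifts through the parametrisation, obtained from continuous logarithms.\<close>

definition circle_exp :: "real \<Rightarrow> complex" where
  "circle_exp t = exp (2 * pi * \<i> * complex_of_real t)"

lemma circle_exp_eq_iff: "circle_exp x = circle_exp y \<longleftrightarrow> (\<exists>n::int. x = y + of_int n)"
proof -
  have "(2 * pi * \<i>) * complex_of_real x = (2 * pi * \<i>) * complex_of_real y + (of_int (2 * n) * pi) * \<i>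
        \<longleftrightarrow> x = y + of_int n" for n :: int
  proof -
    have "(2 * pi * \<i>) * complex_of_real x = (2 * pi * \<i>) * complex_of_real y + (of_int (2 * n) * pi) * \<i>
          \<longleftrightarrow> (2 * pi * \<i>) * complex_of_real x = (2 * pi * \<i>) * complex_of_real (y + of_int n)"
      by (simp add: algebra_simps)
    also have "\<dots> \<longleftrightarrow> x = y + of_int n"
      by (subst mult_left_cancel) (simp_all only: of_real_eq_iff, simp)
    finally show ?thesis .
  qed
  then show ?thesis
    unfolding circle_exp_def exp_eq by simp
qed

lemma continuous_on_circle_exp: "continuous_on A circle_exp"
  unfolding circle_exp_def by (intro continuous_intros)

lemma circle_exp_frac: "circle_exp (frac x) = circle_exp x"
  unfolding circle_exp_eq_iff frac_def by (intro exI[of _ "-\<lfloor>x\<rfloor>"]) simp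

lemma norm_circle_exp: "norm (circle_exp x) = 1"
  by (simp add: circle_exp_def)

lemma continuous_Ints_valued_constant:
  fixes f :: "'a::topological_space \<Rightarrow> real"
  assumes "connected S" "continuous_on S f" "f ` S \<subseteq> \<int>" "x \<in> S" "y \<in> S"
  shows "f x = f y"
proof -
  have "f constant_on S"
  proof (rule continuous_discrete_range_constant[OF assms(1,2)])
    fix x assume x: "x \<in> S"
    show "\<exists>e>0. \<forall>y. y \<in> S \<and> f y \<noteq> f x \<longrightarrow> e \<le> norm (f y - f x)"
    proof (intro exI[of _ 1] conjI allI impI)
      fix y assume "y \<in> S \<and> f y \<noteq> f x"
      then obtain k :: int where "f y - f x = of_int k" "k \<noteq> 0"
        using assms(3) x by (metis Ints_cases Ints_diff image_subset_iff of_int_0 right_minus_eq)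
      then show "1 \<le> norm (f y - f x)" by simp
    qed simp
  qed
  then show ?thesis using assms(4,5) by (auto simp: constant_on_def)
qed

text \<open>Compactness of X makes q a quotient map onto its image.\<close>
lemma continuous_on_factor_compact:
  fixes q :: "'a::t2_space \<Rightarrow> 'b::t2_space" and h :: "'a \<Rightarrow> 'c::topological_space"
  assumes X: "compact X" and q: "continuous_on X q" and h: "continuous_on X h"
    and fibres: "\<And>x y. x \<in> X \<Longrightarrow> y \<in> X \<Longrightarrow> q x = q y \<Longrightarrow> h x = h y"
  obtains g where "continuous_on (q ` X) g" "\<And>x. x \<in> X \<Longrightarrow> g (q x) = h x"
proof
  define g where "g y = h (SOME x. x \<in> X \<and> q x = y)" for y
  show gq: "g (q x) = h x" if "x \<in> X" for x
    unfolding g_def using someI_ex[of "\<lambda>y. y \<in> X \<and> q y = q x"] that fibres by blast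
  show "continuous_on (q ` X) g"
    unfolding continuous_on_open
  proof (intro allI impI)
    fix T assume T: "openin (top_of_set (g ` q ` X)) T"
    have "g ` q ` X = h ` X" using gq by (force simp: image_image)
    then have "openin (top_of_set X) (X \<inter> h -` T)" using h T by (simp add: continuous_on_open)
    moreover have "X \<inter> q -` (q ` X \<inter> g -` T) = X \<inter> h -` T" using gq by (auto; metis gq)
    ultimately show "openin (top_of_set (q ` X)) (q ` X \<inter> g -` T)"
      using Abstract_Topology_2.continuous_imp_quotient_map[OF q refl X, of "q ` X \<inter> g -` T"] by auto
  qed
qed

lemma continuous_on_frac_extension:
  fixes K :: "'b::t2_space \<times> real \<Rightarrow> 'c::topological_space"
  assumes S: "compact S" and K: "continuous_on (S \<times> {0..1}) K"
    and periodic: "\<And>s. s \<in> S \<Longrightarrow> K (s, 1) = K (s, 0)"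
  shows "continuous_on (S \<times> UNIV) (\<lambda>z. K (fst z, frac (snd z)))"
proof -
  define q where "q z = (fst z, circle_exp (snd z))" for z :: "'b \<times> real"
  have frac_in: "(s, frac t) \<in> S \<times> {0..1}" if "s \<in> S" for s t
    using that by (simp add: frac_lt_1 less_imp_le)
  have "continuous_on (S \<times> {0..1}) q"
    unfolding q_def by (intro continuous_intros continuous_on_compose2[OF continuous_on_circle_exp]) auto
  moreover have "K w = K w'" if ww: "w \<in> S \<times> {0..1}" "w' \<in> S \<times> {0..1}" "q w = q w'" for w w'
  proof -
    obtain s t t' where w: "w = (s, t)" "w' = (s, t')"
      using ww(3) unfolding q_def by (cases w; cases w') auto
    with ww have s: "s \<in> S" and t: "t \<in> {0..1}" "t' \<in> {0..1}"
      and e: "circle_exp t = circle_exp t'"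
      by (auto simp: q_def)
    obtain n :: int where n: "t = t' + of_int n" using e circle_exp_eq_iff by blast
    with t have "-1 \<le> n" "n \<le> 1" by auto
    then have "n = 0 \<or> n = 1 \<or> n = -1" by linarith
    with n t have "n = 0 \<or> (t = 1 \<and> t' = 0) \<or> (t = 0 \<and> t' = 1)" by auto
    then show ?thesis using periodic[OF s] n by (elim disjE) (simp_all add: w)
  qed
  ultimately obtain g where g: "continuous_on (q ` (S \<times> {0..1})) g"
    and gq: "\<And>w. w \<in> S \<times> {0..1} \<Longrightarrow> g (q w) = K w"
    using continuous_on_factor_compact[OF compact_Times[OF S compact_Icc] _ K] by metis
  have q_frac: "q (s, frac t) = q (s, t)" for s t
    by (simp add: q_def circle_exp_frac)
  have "continuous_on (S \<times> UNIV) (g \<circ> q)"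
  proof (rule continuous_on_compose)
    show "continuous_on (S \<times> UNIV) q"
      unfolding q_def by (intro continuous_intros continuous_on_compose2[OF continuous_on_circle_exp]) auto
    have "q (s, t) \<in> q ` (S \<times> {0..1})" if "s \<in> S" for s t
      using frac_in[OF that] q_frac by (metis image_eqI)
    then show "continuous_on (q ` (S \<times> UNIV)) g"
      by (intro continuous_on_subset[OF g]) auto
  qed
  moreover have "(g \<circ> q) z = K (fst z, frac (snd z))" if "z \<in> S \<times> UNIV" for z
    using that gq[OF frac_in] q_frac by (cases z) simp
  ultimately show ?thesis
    by (rule continuous_on_eq)
qed

lemma continuous_on_frac_periodic:
  fixes g :: "real \<Rightarrow> 'a::topological_space"
  assumes "continuous_on {0..1} g" "g 1 = g 0"
  shows "continuous_on UNIV (\<lambda>t. g (frac t))"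
proof -
  have "continuous_on ({0::real} \<times> {0..1}) (\<lambda>z. g (snd z))"
    by (rule continuous_on_compose2[OF assms(1)]) (auto intro: continuous_intros)
  then have "continuous_on ({0::real} \<times> UNIV) (\<lambda>z. g (frac (snd z)))"
    using continuous_on_frac_extension[of "{0::real}" "\<lambda>z. g (snd z)"] assms(2) by simp
  then show ?thesis
    using continuous_on_compose2[OF _ continuous_on_Pair[OF continuous_on_const continuous_on_id]]
    by fastforce
qed

definition wind_loop :: "int \<Rightarrow> (real \<Rightarrow> 'a) \<Rightarrow> real \<Rightarrow> 'a" where
  "wind_loop n g t = g (frac (of_int n * t))"

context
  fixes g :: "real \<Rightarrow> 'a::topological_space"
  assumes g: "path g" and loop: "pathfinish g = pathstart g"
begin

lemma continuous_on_loop_frac: "continuous_on UNIV (\<lambda>t. g (frac t))"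
  using g loop by (intro continuous_on_frac_periodic) (auto simp: path_def pathstart_def pathfinish_def)

lemma path_wind_loop: "path (wind_loop n g)"
  unfolding path_def wind_loop_def
  by (rule continuous_on_compose2[OF continuous_on_loop_frac, of _ "\<lambda>t. of_int n * t"])
     (auto intro: continuous_intros)

lemma path_image_wind_loop: "path_image (wind_loop n g) \<subseteq> path_image g"
  by (auto simp: path_image_def wind_loop_def frac_lt_1 less_imp_le)

lemma pathstart_wind_loop: "pathstart (wind_loop n g) = pathstart g"
  and pathfinish_wind_loop: "pathfinish (wind_loop n g) = pathstart g"
  by (simp_all add: wind_loop_def pathstart_def pathfinish_def)

end

lemma wind_loop_at:
  assumes "path g" "path_image g \<subseteq> S" "pathstart g = p" "pathfinish g = p"
  shows "path (wind_loop n g)" "path_image (wind_loop n g) \<subseteq> S"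
    "pathstart (wind_loop n g) = p" "pathfinish (wind_loop n g) = p"
  using assms path_wind_loop pathstart_wind_loop pathfinish_wind_loop
    order_trans[OF path_image_wind_loop assms(2)] by auto

lemma circ_lambda_cong:
  assumes "\<And>t. t \<in> {0..1} \<Longrightarrow> \<gamma> t = \<delta> t"
  shows "circ_lambda c \<gamma> = circ_lambda c \<delta>"
  unfolding circ_lambda_def using assms by simp

context
  fixes c :: "real \<Rightarrow> 'a::t2_space" and S :: "'a set"
  assumes cp: "circle_param c S"
begin

lemma circle_param_continuous: "continuous_on A c"
  using cp unfolding circle_param_def by (meson continuous_on_subset subset_UNIV)

lemma circle_param_add_int: "c (x + of_int n) = c x"
proof (induction n rule: int_induct[where k = 0])
  case (step1 i)
  then show ?case using cp unfolding circle_param_def by (metis add.assoc of_int_add of_int_1)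
next
  case (step2 i)
  then show ?case using cp unfolding circle_param_def by (metis diff_add_cancel of_int_diff of_int_1 add.assoc)
qed simp

lemma circle_param_frac: "c (frac x) = c x"
  using circle_param_add_int[of "frac x" "\<lfloor>x\<rfloor>"] by (simp add: frac_def)

lemma circle_param_eq_iff: "c x = c y \<longleftrightarrow> (\<exists>n::int. x = y + of_int n)"
proof
  assume "c x = c y"
  then have "c (frac x) = c (frac y)" by (simp add: circle_param_frac)
  then have "frac x = frac y"
    using cp unfolding circle_param_def inj_on_def by (simp add: frac_lt_1)
  then show "\<exists>n::int. x = y + of_int n"
    by (intro exI[of _ "\<lfloor>x\<rfloor> - \<lfloor>y\<rfloor>"]) (simp add: frac_def)
qed (auto simp: circle_param_add_int)

lemma circle_param_in [simp]: "c x \<in> S"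
  using cp circle_param_frac[of x] unfolding circle_param_def
  by (metis atLeastLessThan_iff frac_ge_0 frac_lt_1 image_eqI)

lemma circle_param_image_unit_interval: "c ` {0..1} = S"
  using cp unfolding circle_param_def by auto

lemma circle_param_compact: "compact S"
  by (metis circle_param_image_unit_interval compact_Icc compact_continuous_image circle_param_continuous)

lemma circle_param_chart:
  obtains \<phi> where "continuous_on S \<phi>" "\<And>x. \<phi> (c x) = circle_exp x"
proof -
  have "circle_exp x = circle_exp y" if "c x = c y" for x y
    using that by (simp add: circle_param_eq_iff circle_exp_eq_iff)
  then obtain \<phi> where "continuous_on (c ` {0..1}) \<phi>" "\<And>x. x \<in> {0..1} \<Longrightarrow> \<phi> (c x) = circle_exp x"
    using continuous_on_factor_compact[OF compact_Icc circle_param_continuous continuous_on_circle_exp]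
    by metis
  moreover have "\<phi> (c x) = circle_exp x" if "\<And>x. x \<in> {0..1} \<Longrightarrow> \<phi> (c x) = circle_exp x" for x
    using that[of "frac x"] by (simp add: circle_param_frac circle_exp_frac frac_lt_1 less_imp_le)
  ultimately show ?thesis
    using that circle_param_image_unit_interval by simp
qed

text \<open>A lift of K through c is read off from a continuous logarithm of the chart composed with K,
  which exists because D is contractible.\<close>
lemma circle_param_lift:
  fixes K :: "'b::real_normed_vector \<Rightarrow> 'a"
  assumes D: "convex D" and K: "continuous_on D K" "K ` D \<subseteq> S"
  obtains G where "continuous_on D G" "\<And>z. z \<in> D \<Longrightarrow> c (G z) = K z"
proof -
  obtain \<phi> where \<phi>: "continuous_on S \<phi>" "\<And>x. \<phi> (c x) = circle_exp x"
    using circle_param_chart by blast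
  have K_param: "\<exists>x. K z = c x" if "z \<in> D" for z
    using K(2) that cp unfolding circle_param_def by blast
  have "continuous_on D (\<phi> \<circ> K)"
    by (rule continuous_on_compose[OF K(1) continuous_on_subset[OF \<phi>(1) K(2)]])
  moreover have "(\<phi> \<circ> K) z \<noteq> 0" if "z \<in> D" for z
    using K_param[OF that] \<phi>(2) by (auto simp: circle_exp_def)
  ultimately obtain L where L: "continuous_on D L" "\<And>z. z \<in> D \<Longrightarrow> (\<phi> \<circ> K) z = exp (L z)"
    using continuous_logarithm_on_contractible[OF _ convex_imp_contractible[OF D]] by metis
  define G where "G z = Im (L z) / (2 * pi)" for z
  show ?thesis
  proof
    show "continuous_on D G" unfolding G_def by (intro continuous_intros L(1)) simp
    fix z assume z: "z \<in> D"
    obtain x where x: "K z = c x" using K_param[OF z] by blast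
    have e: "exp (L z) = circle_exp x" using L(2)[OF z] x \<phi>(2) by simp
    then have "Re (L z) = 0" using norm_circle_exp[of x] by (metis exp_eq_one_iff norm_exp_eq_Re)
    then have "L z = 2 * pi * \<i> * complex_of_real (G z)"
      by (simp add: G_def complex_eq_iff)
    then have "circle_exp (G z) = circle_exp x" using e by (simp add: circle_exp_def)
    then show "c (G z) = K z" using x by (simp add: circle_param_eq_iff circle_exp_eq_iff)
  qed
qed

lemma circle_param_lifts_diff_const:
  assumes D: "connected D" and g: "continuous_on D g1" "continuous_on D g2"
    and eq: "\<And>z. z \<in> D \<Longrightarrow> c (g1 z) = c (g2 z)" and zw: "z \<in> D" "w \<in> D"
  shows "g1 z - g2 z = g1 w - g2 w"
proof (rule continuous_Ints_valued_constant[OF D _ _ zw])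
  show "continuous_on D (\<lambda>z. g1 z - g2 z)" by (intro continuous_intros g)
  show "(\<lambda>z. g1 z - g2 z) ` D \<subseteq> \<int>"
    using eq by (force simp: circle_param_eq_iff)
qed

lemma circ_lambda_eq_lift:
  assumes g: "continuous_on {0..1} g" "\<And>t. t \<in> {0..1} \<Longrightarrow> c (g t) = \<gamma> t"
  shows "circ_lambda c \<gamma> = g 1 - g 0"
proof -
  let ?P = "\<lambda>d. \<exists>g. continuous_on {0..1} g \<and> (\<forall>t\<in>{0..1}. c (g t) = \<gamma> t) \<and> d = g 1 - g 0"
  have "?P (g 1 - g 0)" using g by blast
  then have "?P (circ_lambda c \<gamma>)" unfolding circ_lambda_def by (rule someI)
  then obtain g' where g': "continuous_on {0..1} g'" "\<And>t. t \<in> {0..1} \<Longrightarrow> c (g' t) = \<gamma> t"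
      "circ_lambda c \<gamma> = g' 1 - g' 0" by blast
  have "g' 1 - g 1 = g' 0 - g 0"
    by (rule circle_param_lifts_diff_const[OF connected_Icc g'(1) g(1)]) (auto simp: g'(2) g(2))
  then show ?thesis using g'(3) by simp
qed

lemma circle_param_path_lift:
  assumes "path \<gamma>" "path_image \<gamma> \<subseteq> S"
  obtains g where "continuous_on {0..1} g" "\<And>t. t \<in> {0..1} \<Longrightarrow> c (g t) = \<gamma> t"
  using circle_param_lift[OF convex_real_interval(5) assms[unfolded path_def path_image_def]] by blast

lemma circ_lambda_loop_Ints:
  assumes "path \<gamma>" "path_image \<gamma> \<subseteq> S" "pathfinish \<gamma> = pathstart \<gamma>"
  shows "circ_lambda c \<gamma> \<in> \<int>"
proof -
  obtain g where g: "continuous_on {0..1} g" "\<And>t. t \<in> {0..1} \<Longrightarrow> c (g t) = \<gamma> t"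
    using circle_param_path_lift[OF assms(1,2)] by blast
  have "c (g 1) = c (g 0)" using g(2)[of 0] g(2)[of 1] assms(3) by (simp add: pathstart_def pathfinish_def)
  then show ?thesis
    using circ_lambda_eq_lift[OF g] by (auto simp: circle_param_eq_iff)
qed

lemma circ_lambda_homotopic_paths:
  assumes "homotopic_paths S \<gamma> \<delta>"
  shows "circ_lambda c \<gamma> = circ_lambda c \<delta>"
proof -
  obtain h where h: "continuous_on ({0..1} \<times> {0..1}) h" "h \<in> ({0..1} \<times> {0..1}) \<rightarrow> S"
    "\<forall>x \<in> {0..1}. h (0, x) = \<gamma> x" "\<forall>x \<in> {0..1}. h (1, x) = \<delta> x"
    "\<forall>s \<in> {0..1::real}. pathstart (h \<circ> Pair s) = pathstart \<gamma> \<and> pathfinish (h \<circ> Pair s) = pathfinish \<gamma>"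
    using assms unfolding homotopic_paths by blast
  obtain G where G: "continuous_on ({0..1} \<times> {0..1}) G" "\<And>z. z \<in> {0..1} \<times> {0..1} \<Longrightarrow> c (G z) = h z"
    using circle_param_lift[OF convex_Times[OF convex_real_interval(5) convex_real_interval(5)] h(1)] h(2)
    by blast
  have G_t: "continuous_on {0..1} (\<lambda>t. G (s, t))" if "s \<in> {0..1}" for s
    by (rule continuous_on_compose2[OF G(1)]) (use that in \<open>auto intro!: continuous_intros\<close>)
  have G_s: "continuous_on {0..1} (\<lambda>s. G (s, t))" if "t \<in> {0..1}" for t
    by (rule continuous_on_compose2[OF G(1)]) (use that in \<open>auto intro!: continuous_intros\<close>)
  have "circ_lambda c \<gamma> = G (0, 1) - G (0, 0)"
    by (rule circ_lambda_eq_lift[OF G_t]) (use G(2) h(3) in auto)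
  moreover have "circ_lambda c \<delta> = G (1, 1) - G (1, 0)"
    by (rule circ_lambda_eq_lift[OF G_t]) (use G(2) h(4) in auto)
  moreover have "G (1, t) = G (0, t)" if "t = 0 \<or> t = 1" for t
    using circle_param_lifts_diff_const[OF connected_Icc G_s continuous_on_const, of t "G (0, t)" 1 0]
      G(2) h(5) that by (auto simp: pathstart_def pathfinish_def)
  ultimately show ?thesis by simp
qed

lemma homotopic_paths_circ_lambda_eq:
  assumes p: "path \<gamma>" "path \<delta>" "path_image \<gamma> \<subseteq> S" "path_image \<delta> \<subseteq> S"
    and st: "pathstart \<gamma> = pathstart \<delta>" and l: "circ_lambda c \<gamma> = circ_lambda c \<delta>"
  shows "homotopic_paths S \<gamma> \<delta>"
proof -
  obtain g where g: "continuous_on {0..1} g" "\<And>t. t \<in> {0..1} \<Longrightarrow> c (g t) = \<gamma> t"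
    using circle_param_path_lift[OF p(1,3)] by blast
  obtain h where h: "continuous_on {0..1} h" "\<And>t. t \<in> {0..1} \<Longrightarrow> c (h t) = \<delta> t"
    using circle_param_path_lift[OF p(2,4)] by blast
  have "c (h 0) = c (g 0)" using g(2)[of 0] h(2)[of 0] st by (simp add: pathstart_def)
  then obtain n :: int where n: "h 0 = g 0 + of_int n" using circle_param_eq_iff by blast
  define h' where "h' t = h t - of_int n" for t
  have h': "continuous_on {0..1} h'" "\<And>t. t \<in> {0..1} \<Longrightarrow> c (h' t) = \<delta> t"
    using h circle_param_add_int[of _ "-n"] by (auto simp: h'_def intro!: continuous_intros)
  have "h' 1 = g 1" "h' 0 = g 0"
    using l n circ_lambda_eq_lift[OF g] circ_lambda_eq_lift[OF h'] by (auto simp: h'_def)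
  then have "homotopic_paths UNIV g h'"
    using g(1) h'(1) by (intro homotopic_paths_linear) (auto simp: path_def pathstart_def pathfinish_def)
  then have "homotopic_paths S (c \<circ> g) (c \<circ> h')"
    by (rule homotopic_paths_continuous_image) (auto simp: circle_param_continuous)
  moreover have "homotopic_paths S \<gamma> (c \<circ> g)"
    by (rule homotopic_paths_eq[OF p(1,3)]) (simp add: g(2))
  moreover have "homotopic_paths S (c \<circ> h') \<delta>"
    using homotopic_paths_eq[OF p(2,4), of "c \<circ> h'"] h'(2) by (simp add: homotopic_paths_sym)
  ultimately show ?thesis using homotopic_paths_trans by blast
qed

text \<open>For a 1-periodic loop, any lift G satisfies G (t + 1) = G t + d with d its degree.\<close>
lemma circ_lambda_rescale_periodic:
  assumes \<sigma>: "continuous_on UNIV \<sigma>" "range \<sigma> \<subseteq> S" "\<And>t. \<sigma> (t + 1) = \<sigma> t"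
  shows "circ_lambda c (\<lambda>t. \<sigma> (a + of_int n * t)) = of_int n * circ_lambda c \<sigma>"
proof -
  obtain G where G: "continuous_on UNIV G" "\<And>z. c (G z) = \<sigma> z"
    using circle_param_lift[OF convex_UNIV \<sigma>(1,2)] by (metis UNIV_I)
  define d where "d = G 1 - G 0"
  have step: "G (t + 1) = G t + d" for t
  proof -
    have "G (t + 1) - G t = G (0 + 1) - G 0"
    proof (rule circle_param_lifts_diff_const[OF connected_UNIV _ G(1)])
      show "continuous_on UNIV (\<lambda>t. G (t + 1))"
        by (rule continuous_on_compose2[OF G(1)]) (auto intro: continuous_intros)
    qed (simp_all add: G(2) \<sigma>(3))
    then show ?thesis by (simp add: d_def)
  qed
  have G_add_int: "G (t + of_int m) = G t + of_int m * d" for t m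
  proof (induction m rule: int_induct[where k = 0])
    case (step1 i)
    have "G (t + of_int (i + 1)) = G ((t + of_int i) + 1)" by (simp add: add.assoc)
    also have "\<dots> = G (t + of_int i) + d" by (rule step)
    finally show ?case using step1 by (simp add: algebra_simps)
  next
    case (step2 i)
    have "G (t + of_int i) = G ((t + of_int (i - 1)) + 1)" by simp
    also have "\<dots> = G (t + of_int (i - 1)) + d" by (rule step)
    finally show ?case using step2 by (simp add: algebra_simps)
  qed simp
  have "circ_lambda c \<sigma> = d"
    unfolding d_def by (rule circ_lambda_eq_lift) (auto intro: continuous_on_subset[OF G(1)] simp: G(2))
  moreover have "circ_lambda c (\<lambda>t. \<sigma> (a + of_int n * t)) = G (a + of_int n * 1) - G (a + of_int n * 0)"
  proof (rule circ_lambda_eq_lift)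
    show "continuous_on {0..1} (\<lambda>t. G (a + of_int n * t))"
      by (rule continuous_on_compose2[OF G(1)]) (auto intro: continuous_intros)
  qed (simp add: G(2))
  ultimately show ?thesis using G_add_int[of a n] by simp
qed

lemma circ_lambda_wind_loop:
  assumes g: "path g" "path_image g \<subseteq> S" "pathfinish g = pathstart g"
  shows "circ_lambda c (wind_loop n g) = of_int n * circ_lambda c g"
proof -
  have "circ_lambda c (\<lambda>t. g (frac (0 + of_int n * t))) = of_int n * circ_lambda c (\<lambda>t. g (frac t))"
  proof (rule circ_lambda_rescale_periodic)
    show "continuous_on UNIV (\<lambda>t. g (frac t))" by (rule continuous_on_loop_frac[OF g(1,3)])
    show "range (\<lambda>t. g (frac t)) \<subseteq> S"
      using g(2) by (auto simp: path_image_def frac_lt_1 less_imp_le)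
  qed (simp add: frac_def)
  moreover have "circ_lambda c (\<lambda>t. g (frac t)) = circ_lambda c g"
  proof (rule circ_lambda_cong)
    fix t :: real assume "t \<in> {0..1}"
    then consider "t = 1" | "frac t = t" by (force simp: frac_eq)
    then show "g (frac t) = g t" using g(3) by cases (auto simp: pathstart_def pathfinish_def)
  qed
  moreover have "wind_loop n g = (\<lambda>t. g (frac (of_int n * t)))"
    by (simp add: fun_eq_iff wind_loop_def)
  ultimately show ?thesis by simp
qed

end

text \<open>A straight-line homotopy in the convex unit square, transported into N by K.\<close>
lemma homotopic_paths_square_sides:
  fixes K :: "real \<times> real \<Rightarrow> 'a::topological_space"
  assumes K: "continuous_on ({0..1} \<times> {0..1}) K" "K ` ({0..1} \<times> {0..1}) \<subseteq> N"
    and u: "\<And>t. t \<in> {0..1} \<Longrightarrow> u t = K (0, t)" and v: "\<And>t. t \<in> {0..1} \<Longrightarrow> v t = K (1, t)"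
    and a: "\<And>s. s \<in> {0..1} \<Longrightarrow> a s = K (s, 0)" and b: "\<And>s. s \<in> {0..1} \<Longrightarrow> b s = K (s, 1)"
  shows "homotopic_paths N u (a +++ v +++ reversepath b)"
proof -
  define L where "L t = (0::real, t)" for t :: real
  define J where "J = (\<lambda>s. (s, 0::real)) +++ (\<lambda>t. (1::real, t)) +++ reversepath (\<lambda>s. (s, 1::real))"
  have J_in: "J t \<in> {0..1} \<times> {0..1}" if "t \<in> {0..1}" for t
    using that by (auto simp: J_def joinpaths_def reversepath_def)
  have "path J"
    unfolding J_def
    by (intro path_join_imp path_reversepath[THEN iffD2])
       (auto simp: path_def pathstart_def pathfinish_def reversepath_def joinpaths_def intro!: continuous_intros)
  then have "homotopic_paths ({0..1} \<times> {0..1}) L J"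
  proof (rule homotopic_paths_linear[rotated])
    show "path L" unfolding L_def path_def by (intro continuous_intros)
    show "pathstart J = pathstart L" "pathfinish J = pathfinish L"
      by (simp_all add: J_def L_def pathstart_def pathfinish_def joinpaths_def reversepath_def)
    show "closed_segment (L t) (J t) \<subseteq> {0..1} \<times> {0..1}" if "t \<in> {0..1}" for t
      using that J_in[OF that] convex_Times[OF convex_real_interval(5) convex_real_interval(5)]
      by (intro closed_segment_subset) (auto simp: L_def)
  qed
  then have KLJ: "homotopic_paths N (K \<circ> L) (K \<circ> J)"
    by (rule homotopic_paths_continuous_image) (use K in auto)
  have "homotopic_paths N u (K \<circ> L)"
    using homotopic_paths_imp_path[OF KLJ] homotopic_paths_imp_subset[OF KLJ]
    by (intro homotopic_paths_sym[OF homotopic_paths_eq]) (auto simp: u L_def)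
  moreover have "homotopic_paths N (K \<circ> J) (a +++ v +++ reversepath b)"
    using homotopic_paths_imp_path[OF KLJ] homotopic_paths_imp_subset[OF KLJ]
    by (intro homotopic_paths_eq) (auto simp: J_def joinpaths_def reversepath_def a v b)
  ultimately show ?thesis
    using KLJ homotopic_paths_trans by metis
qed

lemma homotopic_paths_along_homotopy:
  fixes H :: "'a::topological_space \<times> real \<Rightarrow> 'b::topological_space"
  assumes H: "continuous_on (S \<times> {0..1}) H" "H ` (S \<times> {0..1}) \<subseteq> N"
    and \<gamma>: "path \<gamma>" "path_image \<gamma> \<subseteq> S"
  shows "homotopic_paths N (\<lambda>t. H (\<gamma> t, 0))
           ((\<lambda>s. H (pathstart \<gamma>, s)) +++ (\<lambda>t. H (\<gamma> t, 1)) +++ reversepath (\<lambda>s. H (pathfinish \<gamma>, s)))"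
proof (rule homotopic_paths_square_sides[where K = "\<lambda>z. H (\<gamma> (snd z), fst z)"])
  have "continuous_on ({0..1} \<times> {0..1}) (\<lambda>z. \<gamma> (snd z))"
    using \<gamma>(1) unfolding path_def by (rule continuous_on_compose2) (auto intro: continuous_intros)
  then show "continuous_on ({0..1} \<times> {0..1}) (\<lambda>z. H (\<gamma> (snd z), fst z))"
    using \<gamma>(2) unfolding path_image_def
    by (intro continuous_on_compose2[OF H(1)] continuous_intros) auto
qed (use H(2) \<gamma>(2) in \<open>auto simp: path_image_def pathstart_def pathfinish_def image_subset_iff\<close>)

lemma homotopic_paths_wind_loops:
  fixes K :: "real \<times> real \<Rightarrow> 'a::topological_space"
  assumes K: "continuous_on ({0..1} \<times> {0..1}) K" "K ` ({0..1} \<times> {0..1}) \<subseteq> N"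
    and \<alpha>: "\<And>s. s \<in> {0..1} \<Longrightarrow> K (s, 0) = \<alpha> s" "\<And>s. s \<in> {0..1} \<Longrightarrow> K (s, 1) = \<alpha> s"
  shows "homotopic_paths N (wind_loop n (\<lambda>t. K (0, t)))
           (\<alpha> +++ wind_loop n (\<lambda>t. K (1, t)) +++ reversepath \<alpha>)"
proof (rule homotopic_paths_square_sides[where K = "\<lambda>z. K (fst z, frac (of_int n * snd z))"])
  have ext: "continuous_on ({0..1} \<times> UNIV) (\<lambda>z. K (fst z, frac (snd z)))"
    using \<alpha> by (intro continuous_on_frac_extension[OF compact_Icc K(1)]) simp
  have scale: "continuous_on ({0..1} \<times> {0..1}) (\<lambda>z::real \<times> real. (fst z, of_int n * snd z))"
    by (auto intro!: continuous_intros)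
  show "continuous_on ({0..1} \<times> {0..1}) (\<lambda>z. K (fst z, frac (of_int n * snd z)))"
    using continuous_on_compose2[OF ext scale] by (auto simp: image_subset_iff)
  show "(\<lambda>z. K (fst z, frac (of_int n * snd z))) ` ({0..1} \<times> {0..1}) \<subseteq> N"
    using K(2) by (auto simp: frac_lt_1 less_imp_le)
qed (use \<alpha> in \<open>auto simp: wind_loop_def\<close>)

lemma isot_id_id_continuous:
  assumes "isot_id_id M L F"
  shows "continuous_on (M \<times> {0..1}) (\<lambda>z. F (snd z) (fst z))"
proof -
  obtain G where "homeomorphism (M \<times> {0..1}) (M \<times> {0..1}) (\<lambda>(x, t). (F t x, t)) G"
    using assms unfolding isot_id_id_def by blast
  from continuous_on_fst[OF homeomorphism_cont1[OF this]] show ?thesis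
    by (simp add: case_prod_beta)
qed

lemma isot_id_id_track:
  assumes "isot_id_id M L F" "p \<in> M"
  shows "path (\<lambda>t. F t p)" "pathstart (\<lambda>t. F t p) = p" "pathfinish (\<lambda>t. F t p) = p"
proof -
  have "continuous_on {0..1} (\<lambda>t. (p, t))" by (intro continuous_intros)
  from continuous_on_compose2[OF isot_id_id_continuous[OF assms(1)] this] show "path (\<lambda>t. F t p)"
    unfolding path_def using assms(2) by (auto simp: image_subset_iff)
  show "pathstart (\<lambda>t. F t p) = p" "pathfinish (\<lambda>t. F t p) = p"
    using assms unfolding isot_id_id_def by (simp_all add: pathstart_def pathfinish_def)
qed

text \<open>A track of a point of A stays in L = A \<union> B and is connected, so it cannot jump to the
  disjoint closed set B.\<close>
lemma isot_id_id_track_in_component: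
  assumes F: "isot_id_id M (A \<union> B) F" and AB: "closed A" "closed B" "A \<inter> B = {}" "A \<subseteq> M"
    and p: "p \<in> A"
  shows "path_image (\<lambda>t. F t p) \<subseteq> A"
proof -
  note track = isot_id_id_track[OF F subsetD[OF AB(4) p]]
  have "path_image (\<lambda>t. F t p) \<subseteq> A \<union> B"
    unfolding path_image_def
  proof (rule image_subsetI)
    fix s :: real assume "s \<in> {0..1}"
    with F have "F s ` (A \<union> B) = A \<union> B" unfolding isot_id_id_def by blast
    then show "F s p \<in> A \<union> B" using p by blast
  qed
  moreover have "p \<in> path_image (\<lambda>t. F t p)"
    using pathstart_in_path_image[of "\<lambda>t. F t p"] track(2) by simp
  ultimately show ?thesis
    using connected_path_image[OF track(1)] AB(1-3) p connected_closed[of "path_image (\<lambda>t. F t p)"]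
    by blast
qed

lemma homotopic_paths_isotopy_tracks:
  assumes F: "isot_id_id M L F" and \<alpha>: "path \<alpha>" "path_image \<alpha> \<subseteq> M"
    and N: "\<And>s t. s \<in> {0..1} \<Longrightarrow> t \<in> {0..1} \<Longrightarrow> F t (\<alpha> s) \<in> N"
  shows "homotopic_paths N (wind_loop n (\<lambda>t. F t (pathstart \<alpha>)))
           (\<alpha> +++ wind_loop n (\<lambda>t. F t (pathfinish \<alpha>)) +++ reversepath \<alpha>)"
proof -
  define K where "K z = F (snd z) (\<alpha> (fst z))" for z :: "real \<times> real"
  have "homotopic_paths N (wind_loop n (\<lambda>t. K (0, t))) (\<alpha> +++ wind_loop n (\<lambda>t. K (1, t)) +++ reversepath \<alpha>)"
  proof (rule homotopic_paths_wind_loops)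
    have "continuous_on ({0..1} \<times> {0..1}) (\<lambda>z. (\<alpha> (fst z), snd z))"
      using \<alpha>(1) unfolding path_def by (auto intro!: continuous_intros continuous_on_compose2[of "{0..1}" \<alpha>])
    from continuous_on_compose2[OF isot_id_id_continuous[OF F] this]
    show "continuous_on ({0..1} \<times> {0..1}) K"
      unfolding K_def using \<alpha>(2) by (auto simp: image_subset_iff path_image_def)
    show "K ` ({0..1} \<times> {0..1}) \<subseteq> N"
      using N by (auto simp: K_def)
    show "K (s, 0) = \<alpha> s" "K (s, 1) = \<alpha> s" if "s \<in> {0..1}" for s
      using F \<alpha>(2) that by (auto simp: K_def isot_id_id_def path_image_def image_subset_iff)
  qed
  then show ?thesis
    by (simp add: K_def pathstart_def pathfinish_def)
qed

lemma circ_lambda_eq_of_conjugate: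
  assumes cp1: "circle_param c1 S1" and cp2: "circle_param c2 S2"
    and p1: "p1 \<in> S1" and S2N: "S2 \<subseteq> N"
    and inj: "\<And>\<gamma>1 \<gamma>2. path \<gamma>1 \<Longrightarrow> path_image \<gamma>1 \<subseteq> S1 \<Longrightarrow> pathstart \<gamma>1 = p1 \<Longrightarrow> pathfinish \<gamma>1 = p1 \<Longrightarrow>
                path \<gamma>2 \<Longrightarrow> path_image \<gamma>2 \<subseteq> S1 \<Longrightarrow> pathstart \<gamma>2 = p1 \<Longrightarrow> pathfinish \<gamma>2 = p1 \<Longrightarrow>
                homotopic_paths N \<gamma>1 \<gamma>2 \<Longrightarrow> homotopic_paths S1 \<gamma>1 \<gamma>2"
    and f: "continuous_on S1 f" "f ` S1 \<subseteq> S2" "circ_lambda c2 (f \<circ> c1) = of_int l"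
    and H: "continuous_on (S1 \<times> {0..1}) H" "H ` (S1 \<times> {0..1}) \<subseteq> N"
      "\<And>x. x \<in> S1 \<Longrightarrow> H (x, 0) = x" "\<And>x. x \<in> S1 \<Longrightarrow> H (x, 1) = f x"
    and \<gamma>1: "path \<gamma>1" "path_image \<gamma>1 \<subseteq> S1" "pathstart \<gamma>1 = p1" "pathfinish \<gamma>1 = p1"
    and \<gamma>2: "path \<gamma>2" "path_image \<gamma>2 \<subseteq> S2" "pathstart \<gamma>2 = f p1" "pathfinish \<gamma>2 = f p1"
      "circ_lambda c2 \<gamma>2 = of_int l * of_int n"
    and conj: "homotopic_paths N \<gamma>1 ((\<lambda>s. H (p1, s)) +++ \<gamma>2 +++ reversepath (\<lambda>s. H (p1, s)))"
  shows "circ_lambda c1 \<gamma>1 = of_int n"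
proof -
  define \<alpha> where "\<alpha> s = H (p1, s)" for s
  obtain a where a: "c1 a = p1" using p1 cp1 unfolding circle_param_def by blast
  define Q where "Q t = c1 (a + of_int n * t)" for t
  have c1_periodic: "c1 (t + 1) = c1 t" for t
    using circle_param_add_int[OF cp1, of t 1] by simp
  have Q_in: "Q t \<in> S1" for t
    using cp1 by (simp add: Q_def)
  have Q: "path Q" "path_image Q \<subseteq> S1" "pathstart Q = p1" "pathfinish Q = p1"
    using Q_in a circle_param_add_int[OF cp1, of a n]
    by (auto simp: Q_def path_def path_image_def pathstart_def pathfinish_def
        intro!: continuous_on_compose2[OF circle_param_continuous[OF cp1]] continuous_intros)
  have fQ: "path (f \<circ> Q)" "path_image (f \<circ> Q) \<subseteq> S2" "pathstart (f \<circ> Q) = f p1"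
    using path_continuous_image[OF Q(1) continuous_on_subset[OF f(1) Q(2)]] Q f(2)
    by (auto simp: path_image_compose pathstart_compose)
  have "circ_lambda c1 c1 = 1"
    using circ_lambda_eq_lift[OF cp1, of "\<lambda>t. t"] by (simp add: continuous_on_id)
  then have "circ_lambda c1 Q = of_int n"
    using circ_lambda_rescale_periodic[OF cp1 circle_param_continuous[OF cp1] _ c1_periodic, of a n]
    by (simp add: Q_def[abs_def] image_subset_iff circle_param_in[OF cp1])
  have "circ_lambda c2 (f \<circ> Q) = of_int l * of_int n"
  proof -
    have "continuous_on UNIV (f \<circ> c1)"
      using cp1 f(1) by (intro continuous_on_compose[OF circle_param_continuous[OF cp1]]) (auto intro: continuous_on_subset)
    from circ_lambda_rescale_periodic[OF cp2 this _ _, of a n] show ?thesis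
      using f(2,3) cp1 c1_periodic by (auto simp: Q_def[abs_def] comp_def image_subset_iff)
  qed
  then have "homotopic_paths N \<gamma>2 (f \<circ> Q)"
    using homotopic_paths_circ_lambda_eq[OF cp2 \<gamma>2(1) fQ(1) \<gamma>2(2) fQ(2)] \<gamma>2(3,5) fQ(3) S2N
    by (auto intro: homotopic_paths_subset)
  moreover have "path \<alpha>" "path_image \<alpha> \<subseteq> N" "pathfinish \<alpha> = f p1"
    using H p1 unfolding \<alpha>_def path_def path_image_def pathfinish_def
    by (auto intro!: continuous_on_compose2[OF H(1)] continuous_intros)
  ultimately have "homotopic_paths N (\<alpha> +++ \<gamma>2 +++ reversepath \<alpha>) (\<alpha> +++ (f \<circ> Q) +++ reversepath \<alpha>)"
    using \<gamma>2(3,4) by (intro homotopic_paths_join) auto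
  moreover have "homotopic_paths N Q (\<alpha> +++ (f \<circ> Q) +++ reversepath \<alpha>)"
  proof -
    have "(\<lambda>t. H (Q t, 0)) = Q" "(\<lambda>t. H (Q t, 1)) = f \<circ> Q"
      using H(3,4) Q_in by auto
    then show ?thesis
      using homotopic_paths_along_homotopy[OF H(1,2) Q(1,2)] Q(3,4) by (simp add: \<alpha>_def[abs_def])
  qed
  ultimately have "homotopic_paths N \<gamma>1 Q"
    using conj homotopic_paths_trans homotopic_paths_sym unfolding \<alpha>_def[symmetric] by metis
  then have "homotopic_paths S1 \<gamma>1 Q"
    by (rule inj[OF \<gamma>1 Q])
  then show ?thesis
    using circ_lambda_homotopic_paths[OF cp1] \<open>circ_lambda c1 Q = of_int n\<close> by simp
qed

theorem lemma7:
  fixes M N S1 S2 :: "'a::t2_space set"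
    and c1 c2 :: "real \<Rightarrow> 'a" and p1 p2 :: 'a
    and f :: "'a \<Rightarrow> 'a" and H :: "'a \<times> real \<Rightarrow> 'a"
    and F :: "real \<Rightarrow> 'a \<Rightarrow> 'a" and l :: int
  assumes "CARD('n::finite) \<ge> 2"
    and "top_manifold M TYPE('n)"
    and "circle_param c1 S1" and "circle_param c2 S2"
    and "S1 \<inter> S2 = {}"
    and "S1 \<union> S2 \<subseteq> manifold_interior M TYPE('n)"
    and "p1 \<in> S1" and "p2 \<in> S2"
    and "S1 \<union> S2 \<subseteq> N" and "N \<subseteq> M"
    and inj: "\<And>\<gamma>1 \<gamma>2. path \<gamma>1 \<Longrightarrow> path_image \<gamma>1 \<subseteq> S1 \<Longrightarrow> pathstart \<gamma>1 = p1 \<Longrightarrow> pathfinish \<gamma>1 = p1 \<Longrightarrow>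
                path \<gamma>2 \<Longrightarrow> path_image \<gamma>2 \<subseteq> S1 \<Longrightarrow> pathstart \<gamma>2 = p1 \<Longrightarrow> pathfinish \<gamma>2 = p1 \<Longrightarrow>
                homotopic_paths N \<gamma>1 \<gamma>2 \<Longrightarrow> homotopic_paths S1 \<gamma>1 \<gamma>2"
    and "continuous_on S1 f" and "f ` S1 \<subseteq> S2" and "f p1 = p2"
    and "circ_lambda c2 (f \<circ> c1) = of_int l"
    and "continuous_on (S1 \<times> {0..1}) H" and "H ` (S1 \<times> {0..1}) \<subseteq> N"
    and "\<And>x. x \<in> S1 \<Longrightarrow> H (x, 0) = x" and "\<And>x. x \<in> S1 \<Longrightarrow> H (x, 1) = f x"
    and "isot_id_id M (S1 \<union> S2) F"
    and "\<And>s t. s \<in> {0..1} \<Longrightarrow> t \<in> {0..1} \<Longrightarrow> F t (H (p1, s)) \<in> N"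
  shows "circ_lambda c2 (\<lambda>t. F t p2) = of_int l * circ_lambda c1 (\<lambda>t. F t p1)"
proof -
  note cp1 = assms(3) and cp2 = assms(4) and iso = assms(20)
  have S_closed: "closed S1" "closed S2"
    using circle_param_compact[OF cp1] circle_param_compact[OF cp2] by (auto intro: compact_imp_closed)
  have S_M: "S1 \<subseteq> M" "S2 \<subseteq> M"
    using assms(6) by (auto simp: manifold_interior_def)
  have track1: "path_image (\<lambda>t. F t p1) \<subseteq> S1"
    using isot_id_id_track_in_component[OF iso S_closed assms(5) S_M(1) assms(7)] .
  have track2: "path_image (\<lambda>t. F t p2) \<subseteq> S2"
    using isot_id_id_track_in_component[OF _ S_closed(2,1) _ S_M(2) assms(8)] iso assms(5)
    by (simp add: Un_commute Int_commute)
  note g1 = isot_id_id_track[OF iso subsetD[OF S_M(1) assms(7)]]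
    and g2 = isot_id_id_track[OF iso subsetD[OF S_M(2) assms(8)]]
  let ?\<alpha> = "\<lambda>s. H (p1, s)"
  have "path ?\<alpha>" "path_image ?\<alpha> \<subseteq> N" "pathstart ?\<alpha> = p1" "pathfinish ?\<alpha> = p2"
    using assms(7,14,16-19)
    by (auto simp: path_def path_image_def pathstart_def pathfinish_def
        intro!: continuous_on_compose2[OF assms(16)] continuous_intros)
  then have conj: "homotopic_paths N (wind_loop l (\<lambda>t. F t p1))
      (?\<alpha> +++ wind_loop l (\<lambda>t. F t p2) +++ reversepath ?\<alpha>)"
    using homotopic_paths_isotopy_tracks[OF iso, of ?\<alpha> N l] assms(10,21) by auto
  obtain n where n: "circ_lambda c2 (\<lambda>t. F t p2) = of_int n"
    using circ_lambda_loop_Ints[OF cp2 g2(1) track2] g2(2,3) by (auto elim: Ints_cases)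
  have "circ_lambda c1 (wind_loop l (\<lambda>t. F t p1)) = of_int n"
    using wind_loop_at[OF g1(1) track1 g1(2,3)] wind_loop_at[OF g2(1) track2 g2(2,3)] assms(14)
      circ_lambda_wind_loop[OF cp2 g2(1) track2] g2(2,3) n
    by (intro circ_lambda_eq_of_conjugate[OF cp1 cp2 assms(7) _ assms(11-13,15-19) _ _ _ _ _ _ _ _ _ conj])
       (use assms(9) in auto)
  then show ?thesis
    using circ_lambda_wind_loop[OF cp1 g1(1) track1] g1(2,3) n by simp
qed

end
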